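(* Let $\mathbf q\in\mathbb Z_{\ge2}^n$. Then for every integer $m\ge2$, the simplex $\Delta_{(1,\mathrm{rs}(\mathbf q,m))}$ does not have the integer decomposition property.
   Context: For $\mathbf p=(p_1,\dots,p_N)\in\mathbb Z_{\ge1}^N$ (entries listed in weakly increasing order), let $\Delta_{(1,\mathbf p)}=\mathrm{conv}\{e_1,\dots,e_N,-\sum_{i=1}^N p_ie_i\}\subset\mathbb R^N$; $\Delta_{(1,\mathbf p)}$ is reflexive if and only if $p_i$ divides $1+\sum_j p_j$ for all $i$. For $\mathbf q\in\mathbb Z_{\ge1}^n$, let $\mathrm{lcm}(\mathbf q)$ be the least common multiple of its entries, and let $\mathrm{rsn}(\mathbf q)$ be the least integer $k\ge0$ such that the vector $(1^k,\mathbf q)$, obtained by prepending $k$ entries equal to $1$ to $\mathbf q$, gives a reflexive simplex. For $m\ge1$, $\mathrm{rs}(\mathbf q,m)=(1^{\mathrm{rsn}(\mathbf q)+(m-1)\mathrm{lcm}(\mathbf q)},\mathbf q)$. A lattice polytope $P\subset\mathbb R^N$ has the integer decomposition property if for every integer $m\ge1$, every point of $mP\cap\mathbb Z^N$ is a sum of $m$ points of $P\cap\mathbb Z^N$. *)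

theory Defs
  imports "HOL-Analysis.Analysis"
begin

text \<open>Points of R^N are represented as functions nat => real; the vector
  p = (p_1,...,p_N) is a list of length N, coordinates are 0-based
  (coordinate j of R^N is index j < N).\<close>

definition conv_fin :: "(nat \<Rightarrow> real) set \<Rightarrow> (nat \<Rightarrow> real) set" where
  "conv_fin V = {x. \<exists>c :: (nat \<Rightarrow> real) \<Rightarrow> real.
      (\<forall>v\<in>V. 0 \<le> c v) \<and> (\<Sum>v\<in>V. c v) = 1 \<and> x = (\<lambda>j. \<Sum>v\<in>V. c v * v j)}"

definition unit_vec :: "nat \<Rightarrow> nat \<Rightarrow> real" where
  "unit_vec i = (\<lambda>j. if j = i then 1 else 0)"

definition delta_simplex :: "nat list \<Rightarrow> (nat \<Rightarrow> real) set" where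
  "delta_simplex p = conv_fin
     ({unit_vec i | i. i < length p} \<union>
      {(\<lambda>j. if j < length p then - real (p ! j) else 0)})"

definition lattice_pt :: "(nat \<Rightarrow> real) \<Rightarrow> bool" where
  "lattice_pt x \<longleftrightarrow> (\<forall>j. x j \<in> \<int>)"

definition dilate :: "nat \<Rightarrow> (nat \<Rightarrow> real) set \<Rightarrow> (nat \<Rightarrow> real) set" where
  "dilate m P = (\<lambda>y. (\<lambda>j. real m * y j)) ` P"

definition IDP :: "(nat \<Rightarrow> real) set \<Rightarrow> bool" where
  "IDP P \<longleftrightarrow> (\<forall>m::nat. m \<ge> 1 \<longrightarrow> (\<forall>x \<in> dilate m P. lattice_pt x \<longrightarrow>
      (\<exists>ys :: nat \<Rightarrow> nat \<Rightarrow> real. (\<forall>i<m. ys i \<in> P \<and> lattice_pt (ys i)) \<and>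
          x = (\<lambda>j. \<Sum>i<m. ys i j))))"

text \<open>Reflexivity of Delta_(1,p), via the criterion stated in the paper's context:
  p_i divides 1 + sum_j p_j for all i.\<close>
definition reflexive_vec :: "nat list \<Rightarrow> bool" where
  "reflexive_vec p \<longleftrightarrow> (\<forall>i < length p. p ! i dvd 1 + sum_list p)"

definition lcm_list :: "nat list \<Rightarrow> nat" where
  "lcm_list q = Lcm (set q)"

definition rsn :: "nat list \<Rightarrow> nat" where
  "rsn q = (LEAST k. reflexive_vec (replicate k 1 @ q))"

definition rs :: "nat list \<Rightarrow> nat \<Rightarrow> nat list" where
  "rs q m = replicate (rsn q + (m - 1) * lcm_list q) 1 @ q"

end

theory Submission
  imports Defs
begin

text \<open>Let \<open>p\<close> be reflexive with an entry \<open>p\<^sub>k \<ge> 2\<close> that is at most the number of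
  entries equal to 1. Reflexivity gives \<open>(c + 1) p\<^sub>k = 1 + \<Sum>p\<close> with \<open>c \<ge> 1\<close>, and \<open>-e\<^sub>k\<close>
  lies in \<open>c \<Delta>\<close>. A point of \<open>\<Delta>\<close> is \<open>a - \<mu> p\<close> with \<open>a \<ge> 0\<close> and \<open>\<Sum>a + \<mu> = 1\<close>, so its
  coordinate sum \<open>1 - \<mu> (1 + \<Sum>p)\<close> is at most 1. If \<open>-e\<^sub>k\<close> were a sum of \<open>c\<close> lattice
  points of \<open>\<Delta>\<close>, one of them, \<open>y\<close>, has \<open>y\<^sub>k \<le> -1\<close>, and as the others have coordinate
  sums at most 1, its own is at least \<open>-c\<close>; the two bounds force \<open>\<mu> = 1/p\<^sub>k < 1\<close> for \<open>y\<close>.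
  Then \<open>y\<close> is nonnegative wherever \<open>p\<^sub>j = 1\<close>, and summing its coordinates gives
  \<open>p\<^sub>k > #{j. p\<^sub>j = 1}\<close>. For \<open>rs(q, m)\<close> with \<open>m \<ge> 2\<close> the padding supplies at least
  \<open>lcm(q) \<ge> q\<^sub>1\<close> ones.\<close>

lemma Ints_nonneg_if_gt_minus_one:
  fixes x :: "'a :: linordered_idom"
  assumes "x \<in> \<int>" and "-1 < x"
  shows "0 \<le> x"
proof -
  obtain z where "x = of_int z" using assms(1) by (rule Ints_cases)
  moreover have "of_int (-1) < (of_int z :: 'a)"
    using assms(2) \<open>x = of_int z\<close> by simp
  ultimately show ?thesis by (simp only: of_int_less_iff of_int_0_le_iff)
qed

definition apex :: "nat list \<Rightarrow> nat \<Rightarrow> real" where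
  "apex p = (\<lambda>j. if j < length p then - real (p ! j) else 0)"

lemma apex_not_unit_vec: "i < length p \<Longrightarrow> apex p \<noteq> unit_vec i"
  by (auto simp: apex_def unit_vec_def fun_eq_iff intro!: exI[of _ i])

lemma inj_on_unit_vec: "inj_on unit_vec A"
  by (rule inj_onI) (metis unit_vec_def zero_neq_one)

lemma sum_vertices_delta_simplex:
  "(\<Sum>v\<in>insert (apex p) (unit_vec ` {..<length p}). f v)
    = f (apex p) + (\<Sum>i<length p. f (unit_vec i))"
proof -
  have "apex p \<notin> unit_vec ` {..<length p}"
    using apex_not_unit_vec by blast
  then show ?thesis by (simp add: sum.reindex inj_on_unit_vec)
qed

lemma sum_unit_vec: "(\<Sum>i<N. g i * unit_vec i j) = (if j < N then g j else (0::real))"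
  by (simp add: unit_vec_def if_distrib cong: if_cong)

lemma delta_simplex_eq:
  "delta_simplex p = {x. \<exists>a \<mu>. (\<forall>i<length p. 0 \<le> a i) \<and> 0 \<le> \<mu>
      \<and> (\<Sum>i<length p. a i) + \<mu> = 1
      \<and> x = (\<lambda>j. if j < length p then a j - \<mu> * real (p ! j) else 0)}"
  (is "_ = ?R")
proof -
  have vertices:
    "{unit_vec i | i. i < length p} \<union> {apex p} = insert (apex p) (unit_vec ` {..<length p})"
    by auto
  have combination: "(\<lambda>j. \<Sum>v\<in>insert (apex p) (unit_vec ` {..<length p}). c v * v j)
      = (\<lambda>j. if j < length p then c (unit_vec j) - c (apex p) * real (p ! j) else 0)" for c
  proof
    fix j
    show "(\<Sum>v\<in>insert (apex p) (unit_vec ` {..<length p}). c v * v j)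
        = (if j < length p then c (unit_vec j) - c (apex p) * real (p ! j) else 0)"
      unfolding sum_vertices_delta_simplex sum_unit_vec by (simp add: apex_def)
  qed
  have "delta_simplex p = conv_fin (insert (apex p) (unit_vec ` {..<length p}))"
    unfolding delta_simplex_def apex_def[symmetric] vertices ..
  also have "\<dots> = ?R"
  proof (intro set_eqI iffI)
    fix x assume "x \<in> conv_fin (insert (apex p) (unit_vec ` {..<length p}))"
    then obtain c where "\<forall>v\<in>insert (apex p) (unit_vec ` {..<length p}). 0 \<le> c v"
      "(\<Sum>v\<in>insert (apex p) (unit_vec ` {..<length p}). c v) = 1"
      "x = (\<lambda>j. \<Sum>v\<in>insert (apex p) (unit_vec ` {..<length p}). c v * v j)"
      unfolding conv_fin_def by blast
    then show "x \<in> ?R"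
      unfolding combination
      by (intro CollectI exI[of _ "c \<circ> unit_vec"] exI[of _ "c (apex p)"])
         (auto simp: sum_vertices_delta_simplex add.commute)
  next
    fix x assume "x \<in> ?R"
    then obtain a \<mu> where a: "\<forall>i<length p. 0 \<le> a i" "0 \<le> \<mu>" "(\<Sum>i<length p. a i) + \<mu> = 1"
      "x = (\<lambda>j. if j < length p then a j - \<mu> * real (p ! j) else 0)" by blast
    define c where "c v = (if v = apex p then \<mu> else a (inv_into {..<length p} unit_vec v))" for v
    have c_unit: "c (unit_vec i) = a i" if "i < length p" for i
      using that apex_not_unit_vec[OF that] by (simp add: c_def inj_on_unit_vec)
    have c_apex: "c (apex p) = \<mu>"
      by (simp add: c_def)
    have "(\<Sum>i<length p. c (unit_vec i)) = (\<Sum>i<length p. a i)"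
      by (rule sum.cong) (simp_all add: c_unit)
    moreover have "x = (\<lambda>j. if j < length p then c (unit_vec j) - c (apex p) * real (p ! j) else 0)"
      using a(4) by (simp add: c_unit c_apex fun_eq_iff)
    ultimately show "x \<in> conv_fin (insert (apex p) (unit_vec ` {..<length p}))"
      unfolding conv_fin_def combination using a(1-3) c_unit c_apex
      by (intro CollectI exI[of _ c]) (auto simp: sum_vertices_delta_simplex)
  qed
  finally show ?thesis .
qed

lemma real_sum_list_eq_sum_nth: "real (sum_list p) = (\<Sum>j<length p. real (p ! j))"
  by (simp add: sum_list_sum_nth atLeast0LessThan)

lemma mem_delta_simplexE:
  assumes "y \<in> delta_simplex p"
  obtains \<mu> where "0 \<le> \<mu>" "\<And>j. j < length p \<Longrightarrow> - \<mu> * real (p ! j) \<le> y j"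
    "(\<Sum>j<length p. y j) = 1 - \<mu> * (1 + real (sum_list p))"
proof -
  obtain a \<mu> where a: "\<forall>i<length p. 0 \<le> a i" "0 \<le> \<mu>" "(\<Sum>i<length p. a i) + \<mu> = 1"
    and y: "y = (\<lambda>j. if j < length p then a j - \<mu> * real (p ! j) else 0)"
    using assms unfolding delta_simplex_eq by blast
  have "(\<Sum>j<length p. y j) = (\<Sum>j<length p. a j) - \<mu> * (\<Sum>j<length p. real (p ! j))"
    by (simp add: y sum_subtractf sum_distrib_left)
  also have "\<dots> = 1 - \<mu> * (1 + real (sum_list p))"
    using a(3) by (simp add: real_sum_list_eq_sum_nth algebra_simps)
  finally show thesis
    using a(1,2) by (intro that[of \<mu>]) (auto simp: y)
qed

lemma sum_coordinates_delta_simplex_le: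
  assumes "y \<in> delta_simplex p"
  shows "(\<Sum>j<length p. y j) \<le> 1"
proof -
  obtain \<mu> where "0 \<le> \<mu>" "(\<Sum>j<length p. y j) = 1 - \<mu> * (1 + real (sum_list p))"
    using mem_delta_simplexE[OF assms] by metis
  then show ?thesis by simp
qed

lemma neg_unit_vec_in_dilate_delta_simplex:
  assumes k: "k < length p" and c: "0 < c" and S: "(c + 1) * p ! k = 1 + sum_list p"
  shows "(\<lambda>j. if j = k then -1 else 0) \<in> dilate c (delta_simplex p)"
proof -
  define Q where "Q = real (p ! k)"
  have Q: "0 < Q" using S by (auto simp: Q_def intro!: Nat.gr0I)
  have SQ: "(real c + 1) * Q = 1 + (\<Sum>j<length p. real (p ! j))"
    using arg_cong[OF S, of real] by (simp add: Q_def real_sum_list_eq_sum_nth algebra_simps)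
  define a where "a i = (if i = k then 0 else real (p ! i) / (c * Q))" for i
  have "(\<Sum>i<length p. a i)
      = (\<Sum>i<length p. real (p ! i) / (c * Q) - (if i = k then Q / (c * Q) else 0))"
    by (rule sum.cong) (auto simp: a_def Q_def)
  also have "\<dots> = (\<Sum>i<length p. real (p ! i)) / (c * Q) - Q / (c * Q)"
    using k by (simp add: sum_subtractf sum_divide_distrib)
  finally have "(\<Sum>i<length p. a i) + 1 / (c * Q) = 1"
    using SQ c Q by (simp add: field_simps)
  moreover have "(\<lambda>j. if j = k then -1 / c else 0)
      = (\<lambda>j. if j < length p then a j - 1 / (c * Q) * real (p ! j) else 0)"
    using k Q by (auto simp: a_def Q_def fun_eq_iff)
  ultimately have "(\<lambda>j. if j = k then -1 / c else 0) \<in> delta_simplex p"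
    unfolding delta_simplex_eq using Q c
    by (intro CollectI exI[of _ a] exI[of _ "1 / (c * Q)"]) (auto simp: a_def)
  moreover have "(\<lambda>j. if j = k then -1 else 0) = (\<lambda>j. real c * (if j = k then -1 / c else 0))"
    using c by (auto simp: fun_eq_iff)
  ultimately show ?thesis
    unfolding dilate_def by auto
qed

lemma card_ones_less_if_lattice_pt_delta_simplex:
  assumes y: "y \<in> delta_simplex p" "lattice_pt y"
    and k: "k < length p" "2 \<le> p ! k" "y k \<le> -1"
    and S: "(c + 1) * p ! k = 1 + sum_list p"
    and sum_y: "- real c \<le> (\<Sum>j<length p. y j)"
  shows "card {j. j < length p \<and> p ! j = 1} < p ! k"
proof -
  define Q where "Q = real (p ! k)"
  define n where "n = card {j. j < length p \<and> p ! j = 1}"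
  have Q: "2 \<le> Q" using k(2) by (simp add: Q_def)
  obtain \<mu> where \<mu>: "0 \<le> \<mu>" "\<And>j. j < length p \<Longrightarrow> - \<mu> * real (p ! j) \<le> y j"
    and sum_\<mu>: "(\<Sum>j<length p. y j) = 1 - \<mu> * (1 + real (sum_list p))"
    using mem_delta_simplexE[OF y(1)] by metis
  have "1 + real (sum_list p) = (real c + 1) * Q"
    using arg_cong[OF S, of real] by (simp add: Q_def algebra_simps)
  then have "- real c \<le> 1 - \<mu> * ((real c + 1) * Q)"
    using sum_y sum_\<mu> by simp
  then have "(real c + 1) * (\<mu> * Q) \<le> (real c + 1) * 1"
    by (simp add: algebra_simps)
  then have "\<mu> * Q \<le> 1"
    by (rule mult_left_le_imp_le) simp
  moreover have "1 \<le> \<mu> * Q"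
    using \<mu>(2)[OF k(1)] k(3) by (simp add: Q_def)
  ultimately have \<mu>_Q: "\<mu> * Q = 1" by simp
  have "\<mu> * 2 \<le> \<mu> * Q"
    using Q \<mu>(1) by (rule mult_left_mono)
  then have "\<mu> < 1" using \<mu>_Q by simp
  have "- \<mu> * real (p ! j) + (if p ! j = 1 then \<mu> else 0) \<le> y j" if j: "j < length p" for j
  proof (cases "p ! j = 1")
    case True
    then have "-1 < y j"
      using \<mu>(2)[OF j] \<open>\<mu> < 1\<close> by simp
    then have "0 \<le> y j"
      using y(2) by (intro Ints_nonneg_if_gt_minus_one) (auto simp: lattice_pt_def)
    with True show ?thesis by simp
  qed (use \<mu>(2)[OF j] in simp)
  then have "(\<Sum>j<length p. - \<mu> * real (p ! j) + (if p ! j = 1 then \<mu> else 0))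
      \<le> (\<Sum>j<length p. y j)"
    by (intro sum_mono) simp
  moreover have "(\<Sum>j<length p. if p ! j = 1 then \<mu> else 0) = \<mu> * n"
    by (simp add: sum.If_cases lessThan_def Collect_conj_eq n_def)
  ultimately have "\<mu> * n - \<mu> * real (sum_list p) \<le> 1 - \<mu> * (1 + real (sum_list p))"
    by (simp add: sum_subtractf sum_distrib_left real_sum_list_eq_sum_nth sum_\<mu>)
  then have "\<mu> * (n + 1) \<le> \<mu> * Q"
    using \<mu>_Q by (simp add: algebra_simps)
  moreover have "0 < \<mu>"
    using \<mu>(1) \<mu>_Q by (cases "\<mu> = 0") auto
  ultimately have "n + 1 \<le> Q"
    by (rule mult_left_le_imp_le)
  then show ?thesis by (simp add: Q_def n_def)
qed

lemma reflexive_vec_entry_multiple: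
  assumes "reflexive_vec p" and "k < length p"
  obtains c where "0 < c" "(c + 1) * p ! k = 1 + sum_list p"
proof -
  obtain d where d: "1 + sum_list p = p ! k * d"
    using assms unfolding reflexive_vec_def by blast
  have "p ! k \<le> sum_list p"
    using assms(2) by (intro member_le_sum_list) auto
  have "2 \<le> d"
  proof (rule ccontr)
    assume "\<not> 2 \<le> d"
    then have "p ! k * d \<le> p ! k"
      using mult_le_mono2[of d 1 "p ! k"] by simp
    with d \<open>p ! k \<le> sum_list p\<close> show False by linarith
  qed
  with d show thesis
    by (intro that[of "d - 1"]) auto
qed

lemma lattice_decomposition_neg_unit_vecE:
  assumes ys: "\<forall>s<c. ys s \<in> delta_simplex p \<and> lattice_pt (ys s)"
    and x: "(\<lambda>j. if j = k then -1 else 0) = (\<lambda>j. \<Sum>s<c. ys s j)" and k: "k < length p"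
  obtains s0 where "s0 < c" "ys s0 k \<le> -1" "- real c \<le> (\<Sum>j<length p. ys s0 j)"
proof -
  have sum_k: "(\<Sum>s<c. ys s k) = -1"
    using fun_cong[OF x, of k] by simp
  have "\<exists>s0<c. ys s0 k < 0"
  proof (rule ccontr)
    assume "\<not> (\<exists>s0<c. ys s0 k < 0)"
    then have "0 \<le> (\<Sum>s<c. ys s k)"
      by (intro sum_nonneg) (metis lessThan_iff not_less)
    with sum_k show False by simp
  qed
  then obtain s0 where s0: "s0 < c" "ys s0 k < 0"
    by blast
  have "ys s0 k \<le> -1"
  proof (rule ccontr)
    assume "\<not> ys s0 k \<le> -1"
    then have "0 \<le> ys s0 k"
      using ys s0(1) by (intro Ints_nonneg_if_gt_minus_one) (auto simp: lattice_pt_def)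
    with s0(2) show False by simp
  qed
  have "-1 = (\<Sum>j<length p. if j = k then -1 else 0 :: real)"
    using k by simp
  also have "\<dots> = (\<Sum>j<length p. \<Sum>s<c. ys s j)"
    by (simp only: x)
  also have "\<dots> = (\<Sum>s<c. \<Sum>j<length p. ys s j)"
    by (rule sum.swap)
  also have "\<dots> = (\<Sum>j<length p. ys s0 j) + (\<Sum>s\<in>{..<c} - {s0}. \<Sum>j<length p. ys s j)"
    using s0(1) by (simp add: sum.remove)
  also have "\<dots> \<le> (\<Sum>j<length p. ys s0 j) + (\<Sum>s\<in>{..<c} - {s0}. 1)"
    using ys by (intro add_left_mono sum_mono sum_coordinates_delta_simplex_le) auto
  also have "\<dots> = (\<Sum>j<length p. ys s0 j) + (real c - 1)"
    using s0(1) by (simp add: of_nat_diff)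
  finally show thesis
    using s0(1) \<open>ys s0 k \<le> -1\<close> by (intro that) auto
qed

lemma not_IDP_delta_simplex_if_reflexive:
  assumes refl: "reflexive_vec p" and k: "k < length p" "2 \<le> p ! k"
    and ones: "p ! k \<le> card {j. j < length p \<and> p ! j = 1}"
  shows "\<not> IDP (delta_simplex p)"
proof
  assume IDP: "IDP (delta_simplex p)"
  obtain c where c: "0 < c" and S: "(c + 1) * p ! k = 1 + sum_list p"
    using reflexive_vec_entry_multiple[OF refl k(1)] .
  have "(\<lambda>j. if j = k then -1 else 0) \<in> dilate c (delta_simplex p)"
    using k(1) c S by (rule neg_unit_vec_in_dilate_delta_simplex)
  moreover have "lattice_pt (\<lambda>j. if j = k then -1 else 0)"
    by (simp add: lattice_pt_def)
  moreover have "1 \<le> c"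
    using c by simp
  ultimately obtain ys where ys: "\<forall>s<c. ys s \<in> delta_simplex p \<and> lattice_pt (ys s)"
    and x: "(\<lambda>j. if j = k then -1 else 0) = (\<lambda>j. \<Sum>s<c. ys s j)"
    using IDP unfolding IDP_def by blast
  obtain s0 where "s0 < c" "ys s0 k \<le> -1" "- real c \<le> (\<Sum>j<length p. ys s0 j)"
    using lattice_decomposition_neg_unit_vecE[OF ys x k(1)] .
  then have "card {j. j < length p \<and> p ! j = 1} < p ! k"
    using ys k S by (intro card_ones_less_if_lattice_pt_delta_simplex) auto
  with ones show False by simp
qed

lemma reflexive_vec_replicate_iff:
  "reflexive_vec (replicate k 1 @ q) \<longleftrightarrow> (\<forall>x\<in>set q. x dvd 1 + k + sum_list q)"
  unfolding reflexive_vec_def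
proof (intro iffI ballI allI impI)
  fix x assume refl: "\<forall>i<length (replicate k 1 @ q).
      (replicate k 1 @ q) ! i dvd 1 + sum_list (replicate k 1 @ q)"
    and "x \<in> set q"
  then obtain i where "i < length q" "x = q ! i"
    by (auto simp: in_set_conv_nth)
  then show "x dvd 1 + k + sum_list q"
    using refl[rule_format, of "k + i"] by (simp add: nth_append sum_list_replicate add.assoc)
next
  fix i assume "\<forall>x\<in>set q. x dvd 1 + k + sum_list q" and "i < length (replicate k 1 @ q)"
  then show "(replicate k 1 @ q) ! i dvd 1 + sum_list (replicate k 1 @ q)"
    by (auto simp: nth_append sum_list_replicate add.assoc)
qed

lemma dvd_lcm_list: "x \<in> set q \<Longrightarrow> x dvd lcm_list q"
  by (simp add: lcm_list_def dvd_Lcm)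

lemma lcm_list_pos: "0 \<notin> set q \<Longrightarrow> 0 < lcm_list q"
  unfolding lcm_list_def by (metis Lcm_0_iff_nat finite_set gr0I)

lemma reflexive_vec_replicate_add_lcm:
  assumes "reflexive_vec (replicate k 1 @ q)"
  shows "reflexive_vec (replicate (k + n * lcm_list q) 1 @ q)"
  using assms dvd_lcm_list unfolding reflexive_vec_replicate_iff
  by (metis add.commute add.left_commute dvd_add dvd_mult)

lemma reflexive_vec_rsn:
  assumes "0 \<notin> set q"
  shows "reflexive_vec (replicate (rsn q) 1 @ q)"
proof -
  define T where "T = 1 + sum_list q"
  have "T \<le> lcm_list q * T"
    using lcm_list_pos[OF assms] by simp
  then have "1 + (lcm_list q * T - T) + sum_list q = lcm_list q * T"
    by (simp add: T_def)
  then have "reflexive_vec (replicate (lcm_list q * T - T) 1 @ q)"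
    unfolding reflexive_vec_replicate_iff by (metis dvd_lcm_list dvd_mult2)
  then show ?thesis
    unfolding rsn_def by (rule LeastI)
qed

lemma reflexive_vec_rs: "0 \<notin> set q \<Longrightarrow> reflexive_vec (rs q m)"
  unfolding rs_def by (intro reflexive_vec_replicate_add_lcm reflexive_vec_rsn)

lemma card_ones_replicate_append:
  "k \<le> card {j. j < length (replicate k 1 @ q) \<and> (replicate k 1 @ q) ! j = 1}"
proof -
  have "{..<k} \<subseteq> {j. j < length (replicate k 1 @ q) \<and> (replicate k 1 @ q) ! j = 1}"
    by (auto simp: nth_append)
  then show ?thesis
    using card_mono[of _ "{..<k}"] by fastforce
qed

theorem theorem5p4:
  fixes q :: "nat list" and m :: nat
  assumes "q \<noteq> []"
    and "\<forall>x \<in> set q. 2 \<le> x"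
    and "2 \<le> m"
  shows "\<not> IDP (delta_simplex (rs q m))"
proof -
  have q0: "0 \<notin> set q"
    using assms(2) by force
  define k where "k = rsn q + (m - 1) * lcm_list q"
  have rs: "rs q m = replicate k 1 @ q"
    by (simp add: rs_def k_def)
  have entry: "rs q m ! k = hd q"
    using assms(1) by (simp add: rs nth_append hd_conv_nth)
  have "hd q \<le> lcm_list q"
    using assms(1) lcm_list_pos[OF q0] by (intro dvd_imp_le dvd_lcm_list) auto
  also have "\<dots> \<le> (m - 1) * lcm_list q"
    using mult_le_mono1[of 1 "m - 1" "lcm_list q"] assms(3) by linarith
  also have "\<dots> \<le> k"
    by (simp add: k_def)
  also have "k \<le> card {j. j < length (rs q m) \<and> rs q m ! j = 1}"
    unfolding rs by (rule card_ones_replicate_append)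
  finally show ?thesis
    using assms(1,2) entry
    by (intro not_IDP_delta_simplex_if_reflexive[OF reflexive_vec_rs[OF q0], where k = k]) (auto simp: rs)
qed

end
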